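(* For each $n\ge1$ and each $k\ge0$, the number of plane trees with $n$ edges and exactly $k$ young leaves equals the number of Dyck paths of length $2n$ with exactly $k$ peaks at even height (a peak $UD$ being at height $h$ if its top point has $y$-coordinate $h$).
   Context: A plane tree is a rooted tree in which the children of each vertex are linearly ordered (left to right). A leaf is a vertex with no children; by convention the tree consisting of a single vertex (no edges) has no leaves. A leaf is a young leaf if it is not the leftmost child of its parent. A Dyck path of length $2n$ is a lattice path from $(0,0)$ to $(2n,0)$ with steps $U=(1,1)$, $D=(1,-1)$ never going below the $x$-axis; a peak is an occurrence of consecutive steps $UD$. *)

theory Defs
  imports Main
begin

datatype ptree = Node "ptree list"

fun edges :: "ptree \<Rightarrow> nat" where
  "edges (Node cs) = (\<Sum>c\<leftarrow>cs. Suc (edges c))"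

fun is_leaf :: "ptree \<Rightarrow> bool" where
  "is_leaf (Node cs) = (cs = [])"

text \<open>Young leaves: leaf children that are not the leftmost child of their parent
  (i.e. child positions i \<ge> 1), counted over all vertices.\<close>
fun young_leaves :: "ptree \<Rightarrow> nat" where
  "young_leaves (Node cs) =
     card {i. 1 \<le> i \<and> i < length cs \<and> is_leaf (cs ! i)} + (\<Sum>c\<leftarrow>cs. young_leaves c)"

text \<open>Dyck paths as step lists: True = U = (1,1), False = D = (1,-1).\<close>
definition height :: "bool list \<Rightarrow> int" where
  "height w = int (length (filter id w)) - int (length (filter Not w))"

definition dyck_path :: "nat \<Rightarrow> bool list \<Rightarrow> bool" where
  "dyck_path n w \<longleftrightarrow> length w = 2 * n \<and> height w = 0 \<and>
     (\<forall>j \<le> length w. height (take j w) \<ge> 0)"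

text \<open>A peak is an occurrence of UD at positions i, i+1; its top point is the end of the
  U step, at height (height of the first i+1 steps).\<close>
definition even_peaks :: "bool list \<Rightarrow> nat" where
  "even_peaks w = card {i. Suc i < length w \<and> w ! i \<and> \<not> w ! Suc i \<and>
                           even (height (take (Suc i) w))}"

end

theory Submission
  imports Defs
begin

text \<open>A plane tree whose root has the children \<open>c\<^sub>1, \<dots>, c\<^sub>m\<close> is encoded as the path
  \<open>U P(c\<^sub>2) \<dots> P(c\<^sub>m) D P(c\<^sub>1)\<close> with \<open>P(s) = U path(s) D\<close>: the leftmost subtree follows the
  closing step at the height of its parent, all other subtrees are lifted by one. Hence the path
  of a tree starts at even height and the block \<open>P(c\<^sub>2) \<dots> P(c\<^sub>m)\<close> at odd height, and the
  only \<open>UD\<close>'s with even top are the \<open>P(c\<^sub>i)\<close>, \<open>i \<ge> 2\<close>, of leaves \<open>c\<^sub>i\<close>, i.e. the young leaves.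
  The encoding is a bijection onto the words generated by \<open>\<epsilon> | U x D y\<close>, which are exactly
  the Dyck paths.\<close>

lemma height_Nil [simp]: "height [] = 0"
  and height_Cons [simp]: "height (x # w) = (if x then 1 else -1) + height w"
  and height_append [simp]: "height (u @ v) = height u + height v"
  by (auto simp: height_def)

fun nonneg_from :: "int \<Rightarrow> bool list \<Rightarrow> bool" where
  "nonneg_from h [] \<longleftrightarrow> 0 \<le> h"
| "nonneg_from h (x # w) \<longleftrightarrow> 0 \<le> h \<and> nonneg_from (if x then h + 1 else h - 1) w"

lemma nonneg_from_start: "nonneg_from h w \<Longrightarrow> 0 \<le> h"
  by (cases w) auto

lemma nonneg_from_append [simp]:
  "nonneg_from h (u @ v) \<longleftrightarrow> nonneg_from h u \<and> nonneg_from (h + height u) v"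
  by (induction u arbitrary: h) (auto simp: algebra_simps dest: nonneg_from_start)

lemma nonneg_from_iff_prefixes:
  "nonneg_from h w \<longleftrightarrow> (\<forall>j \<le> length w. 0 \<le> h + height (take j w))"
proof (induction w arbitrary: h)
  case (Cons x w)
  have "(\<forall>j \<le> length (x # w). P j) \<longleftrightarrow> P 0 \<and> (\<forall>j \<le> length w. P (Suc j))" for P
    by (simp add: less_Suc_eq_le[symmetric] All_less_Suc2)
  then show ?case
    using Cons.IH by (simp add: algebra_simps)
qed simp

lemma card_Collect_nat_Suc_shift:
  assumes "finite {i::nat. P i}"
  shows "card {i. P i} = (if P 0 then 1 else 0) + card {i. P (Suc i)}"
proof -
  have "{i. P i} = {i. i = 0 \<and> P 0} \<union> Suc ` {i. P (Suc i)}"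
    by (auto simp: image_iff) (metis not0_implies_Suc)+
  moreover have "finite (Suc ` {i. P (Suc i)})"
    using assms by (rule finite_subset[rotated]) auto
  ultimately show ?thesis
    by (simp add: card_Un_disjoint card_image)
qed

inductive balanced :: "bool list \<Rightarrow> bool" where
  balanced_Nil: "balanced []"
| balanced_nest: "balanced u \<Longrightarrow> balanced v \<Longrightarrow> balanced (True # u @ False # v)"

lemma balanced_height: "balanced w \<Longrightarrow> height w = 0"
  by (induction rule: balanced.induct) auto

lemma balanced_nonneg_from: "balanced w \<Longrightarrow> 0 \<le> h \<Longrightarrow> nonneg_from h w"
  by (induction arbitrary: h rule: balanced.induct) (auto simp: balanced_height)

lemma balanced_hd_last: "balanced w \<Longrightarrow> w \<noteq> [] \<Longrightarrow> hd w \<and> \<not> last w"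
  by (induction rule: balanced.induct) auto

lemma append_eq_append_Cons_cases:
  assumes "u @ v = x @ a # y"
  obtains m where "x = u @ m" "v = m @ a # y"
  | m where "u = x @ a # m" "y = m @ v"
proof -
  obtain us where "u @ us = x \<and> v = us @ a # y \<or> u = x @ us \<and> us @ v = a # y"
    using assms by (auto simp: append_eq_append_conv2)
  then show thesis
    using that(1)[of "[]"] that by (cases us) auto
qed

lemma balanced_insert_peak: "balanced (u @ v) \<Longrightarrow> balanced (u @ True # False # v)"
proof (induction "u @ v" arbitrary: u v rule: balanced.induct)
  case balanced_Nil
  then show ?case
    using balanced.intros(2)[OF balanced.intros(1) balanced.intros(1)] by simp
next
  case (balanced_nest x y)
  note IH_x = balanced_nest.hyps(2) and IH_y = balanced_nest.hyps(4)
  show ?case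
  proof (cases u)
    case Nil
    then show ?thesis
      using balanced_nest.hyps(5)
        balanced.balanced_nest[OF balanced.balanced_Nil balanced.balanced_nest[OF balanced_nest.hyps(1,3)]]
      by simp
  next
    case (Cons a u')
    with balanced_nest.hyps(5) have "a" and "u' @ v = x @ False # y"
      by auto
    from this(2) show ?thesis
    proof (cases rule: append_eq_append_Cons_cases)
      case (1 m)
      then have "balanced (u' @ True # False # m)"
        using IH_x by simp
      then have "balanced (True # (u' @ True # False # m) @ False # y)"
        using balanced_nest.hyps(3) by (rule balanced.balanced_nest)
      then show ?thesis
        using 1 Cons \<open>a\<close> by simp
    next
      case (2 m)
      then have "balanced (m @ True # False # v)"
        using IH_y by simp
      then have "balanced (True # x @ False # m @ True # False # v)"
        by (rule balanced.balanced_nest[OF balanced_nest.hyps(1)])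
      then show ?thesis
        using 2 Cons \<open>a\<close> by simp
    qed
  qed
qed

lemma balanced_replicate_True_append:
  "nonneg_from (int n) w \<Longrightarrow> int n + height w = 0 \<Longrightarrow> balanced (replicate n True @ w)"
proof (induction w arbitrary: n)
  case Nil
  then show ?case by (simp add: balanced_Nil)
next
  case (Cons x w)
  show ?case
  proof (cases x)
    case True
    then have "balanced (replicate (Suc n) True @ w)"
      using Cons.prems by (intro Cons.IH) (auto simp: algebra_simps)
    then show ?thesis
      using True by (simp add: replicate_app_Cons_same)
  next
    case False
    with Cons.prems have "nonneg_from (int n - 1) w"
      by simp
    then obtain m where m: "n = Suc m"
      using nonneg_from_start[of "int n - 1" w] by (cases n) auto
    then have "balanced (replicate m True @ w)"
      using Cons.prems False by (intro Cons.IH) auto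
    then have "balanced (replicate m True @ True # False # w)"
      by (rule balanced_insert_peak)
    then show ?thesis
      using m False by (simp add: replicate_append_same[symmetric])
  qed
qed

lemma dyck_path_iff_balanced: "dyck_path n w \<longleftrightarrow> balanced w \<and> length w = 2 * n"
proof -
  have "dyck_path n w \<longleftrightarrow> nonneg_from 0 w \<and> height w = 0 \<and> length w = 2 * n"
    using nonneg_from_iff_prefixes[of 0 w] by (auto simp: dyck_path_def)
  then show ?thesis
    using balanced_replicate_True_append[of 0 w] balanced_nonneg_from[of w 0] balanced_height
    by auto
qed

lemma balanced_not_nonneg_from_append_False: "balanced u \<Longrightarrow> \<not> nonneg_from 0 (u @ False # v)"
  by (auto simp: balanced_height dest: nonneg_from_start)

lemma balanced_first_return_unique:
  assumes "balanced u" "balanced u'" "u @ False # v = u' @ False # v'"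
  shows "u = u' \<and> v = v'"
proof -
  have "u' = u @ False # m \<Longrightarrow> False" for m
    using assms(1,2) balanced_nonneg_from[of u' 0] balanced_not_nonneg_from_append_False by auto
  moreover have "u = u' @ False # m \<Longrightarrow> False" for m
    using assms(1,2) balanced_nonneg_from[of u 0] balanced_not_nonneg_from_append_False by auto
  ultimately show ?thesis
    using assms(3) by (auto simp: append_eq_append_conv2 append_eq_Cons_conv Cons_eq_append_conv)
qed

fun even_peaks_from :: "int \<Rightarrow> bool list \<Rightarrow> nat" where
  "even_peaks_from h [] = 0"
| "even_peaks_from h (x # w) =
     (if x \<and> w \<noteq> [] \<and> \<not> hd w \<and> even (h + 1) then 1 else 0)
     + even_peaks_from (if x then h + 1 else h - 1) w"

lemma card_even_peaks:
  "card {i. Suc i < length w \<and> w ! i \<and> \<not> w ! Suc i \<and> even (h + height (take (Suc i) w))}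
   = even_peaks_from h w"
proof (induction w arbitrary: h)
  case (Cons x w)
  let ?peak = "\<lambda>w h i. Suc i < length w \<and> w ! i \<and> \<not> w ! Suc i \<and> even (h + height (take (Suc i) w))"
  let ?h = "if x then h + 1 else h - 1"
  have "finite {i. ?peak (x # w) h i}"
    by (rule finite_subset[of _ "{..<length (x # w)}"]) auto
  then have "card {i. ?peak (x # w) h i}
             = (if ?peak (x # w) h 0 then 1 else 0) + card {i. ?peak (x # w) h (Suc i)}"
    by (rule card_Collect_nat_Suc_shift)
  also have "{i. ?peak (x # w) h (Suc i)} = {i. ?peak w ?h i}"
    by (cases x) (simp_all add: algebra_simps)
  also have "?peak (x # w) h 0 \<longleftrightarrow> x \<and> w \<noteq> [] \<and> \<not> hd w \<and> even (h + 1)"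
    by (cases w) auto
  finally show ?case
    using Cons.IH[of ?h] by simp
qed simp

lemma even_peaks_eq_even_peaks_from: "even_peaks w = even_peaks_from 0 w"
  using card_even_peaks[of w 0] by (simp add: even_peaks_def)

lemma even_peaks_from_append:
  assumes "u = [] \<or> v = [] \<or> \<not> last u \<or> hd v"
  shows "even_peaks_from h (u @ v) = even_peaks_from h u + even_peaks_from (h + height u) v"
  using assms
proof (induction u arbitrary: h)
  case (Cons x u)
  then show ?case
    by (cases "u = []") (auto simp: algebra_simps neq_Nil_conv)
qed simp

lemma even_peaks_from_append_balanced:
  "balanced u \<Longrightarrow> even_peaks_from h (u @ v) = even_peaks_from h u + even_peaks_from h v"
  using even_peaks_from_append[of u v h] balanced_hd_last[of u] by (auto simp: balanced_height)

lemma young_leaves_Node_Cons: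
  "young_leaves (Node (c # cs)) = young_leaves c + length (filter is_leaf cs) + (\<Sum>t\<leftarrow>cs. young_leaves t)"
proof -
  have "card {i. 1 \<le> i \<and> i < length (c # cs) \<and> is_leaf ((c # cs) ! i)}
        = card {i. i < length cs \<and> is_leaf (cs ! i)}"
    by (subst card_Collect_nat_Suc_shift) auto
  then show ?thesis
    by (simp add: length_filter_conv_card)
qed

fun tree_path :: "ptree \<Rightarrow> bool list" and forest_path :: "ptree list \<Rightarrow> bool list" where
  "tree_path (Node []) = []"
| "tree_path (Node (c # cs)) = True # forest_path cs @ False # tree_path c"
| "forest_path [] = []"
| "forest_path (t # ts) = True # tree_path t @ False # forest_path ts"

lemma length_tree_path: "length (tree_path t) = 2 * edges t"
  and length_forest_path: "length (forest_path ts) = 2 * edges (Node ts)"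
  by (induction t and ts rule: tree_path_forest_path.induct) auto

lemma balanced_tree_path: "balanced (tree_path t)"
  and balanced_forest_path: "balanced (forest_path ts)"
  by (induction t and ts rule: tree_path_forest_path.induct) (auto intro: balanced.intros)

lemma tree_path_eq_Nil_iff: "tree_path t = [] \<longleftrightarrow> is_leaf t"
  by (cases t rule: tree_path.cases) auto

lemma even_peaks_from_tree_path:
  "even h \<Longrightarrow> even_peaks_from h (tree_path t) = young_leaves t"
  and even_peaks_from_forest_path:
  "odd h \<Longrightarrow> even_peaks_from h (forest_path ts) = length (filter is_leaf ts) + (\<Sum>t\<leftarrow>ts. young_leaves t)"
proof (induction t and ts arbitrary: h and h rule: tree_path_forest_path.induct)
  case (2 c cs)
  have "hd (forest_path cs @ False # tree_path c)"
    if "forest_path cs \<noteq> []"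
    using that balanced_hd_last[OF balanced_forest_path] by simp
  then show ?case
    using 2 by (auto simp: even_peaks_from_append_balanced balanced_forest_path young_leaves_Node_Cons
        simp del: young_leaves.simps)
next
  case (4 t ts)
  have "hd (tree_path t @ False # forest_path ts) \<longleftrightarrow> \<not> is_leaf t"
    using balanced_hd_last[OF balanced_tree_path, of t] tree_path_eq_Nil_iff[of t] by auto
  then show ?case
    using 4 by (auto simp: even_peaks_from_append_balanced balanced_tree_path tree_path_eq_Nil_iff)
qed auto

lemma even_peaks_tree_path: "even_peaks (tree_path t) = young_leaves t"
  by (simp add: even_peaks_eq_even_peaks_from even_peaks_from_tree_path)

lemma tree_path_inj: "tree_path t = tree_path t' \<Longrightarrow> t = t'"
  and forest_path_inj: "forest_path ts = forest_path ts' \<Longrightarrow> ts = ts'"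
proof (induction t and ts arbitrary: t' and ts' rule: tree_path_forest_path.induct)
  case 1
  then show ?case
    by (cases t' rule: tree_path.cases) auto
next
  case (2 c cs)
  then show ?case
    by (cases t' rule: tree_path.cases)
      (auto dest: balanced_first_return_unique[OF balanced_forest_path balanced_forest_path])
next
  case 3
  then show ?case
    by (cases ts') auto
next
  case (4 t ts)
  then show ?case
    by (cases ts')
      (auto dest: balanced_first_return_unique[OF balanced_tree_path balanced_tree_path])
qed

lemma balanced_in_range_tree_path: "balanced w \<Longrightarrow> w \<in> range tree_path \<and> w \<in> range forest_path"
proof (induction rule: balanced.induct)
  case balanced_Nil
  have "tree_path (Node []) = []" "forest_path [] = []"
    by simp_all
  then show ?case
    by (metis rangeI)
next
  case (balanced_nest u v)
  then obtain tu fu tv fv where "u = tree_path tu" "u = forest_path fu" "v = tree_path tv" "v = forest_path fv"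
    by blast
  then have "tree_path (Node (tv # fu)) = True # u @ False # v" "forest_path (tu # fv) = True # u @ False # v"
    by simp_all
  then show ?case
    by (metis rangeI)
qed

lemma range_tree_path: "range tree_path = {w. balanced w}"
  using balanced_in_range_tree_path balanced_tree_path by blast

lemma inj_tree_path: "inj tree_path"
  by (rule injI) (rule tree_path_inj)

lemma image_tree_path_edges_young_leaves:
  "tree_path ` {t. edges t = n \<and> young_leaves t = k} = {w. dyck_path n w \<and> even_peaks w = k}"
proof (intro equalityI subsetI)
  fix w
  assume w: "w \<in> {w. dyck_path n w \<and> even_peaks w = k}"
  then obtain t where "w = tree_path t"
    using range_tree_path by (auto simp: dyck_path_iff_balanced)
  with w show "w \<in> tree_path ` {t. edges t = n \<and> young_leaves t = k}"
    by (auto simp: dyck_path_iff_balanced length_tree_path even_peaks_tree_path)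
qed (auto simp: dyck_path_iff_balanced length_tree_path even_peaks_tree_path balanced_tree_path)

theorem mainTheorem7:
  fixes n k :: nat
  assumes "n \<ge> 1"
  shows "card {t. edges t = n \<and> young_leaves t = k}
       = card {w. dyck_path n w \<and> even_peaks w = k}"
proof (rule bij_betw_same_card)
  show "bij_betw tree_path {t. edges t = n \<and> young_leaves t = k} {w. dyck_path n w \<and> even_peaks w = k}"
    using inj_on_subset[OF inj_tree_path] image_tree_path_edges_young_leaves
    by (simp add: bij_betw_def)
qed

end
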